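(* Let $K$ be a field of characteristic $0$, $\theta=t\frac{d}{dt}$, $\mathcal{L}=\theta^n+\sum_{i=0}^{n-1}a_i\theta^i$ with $a_i\in K(t)$, and $\mathcal{M}_{\mathcal{L}}=K(t)[\theta]/K(t)[\theta]\mathcal{L}$ with generator $\eta$ and $\eta^{(i)}=\theta^i\eta$. Let $\langle\,,\rangle$ be a $K(t)$-bilinear horizontal pairing $\mathcal{M}_{\mathcal{L}}\times\mathcal{M}_{\mathcal{L}}\to K(t)$ such that $\langle\eta,\eta^{(i)}\rangle=0$ for $0\le i<n-1$, and put $\gamma=\langle\eta,\eta^{(n-1)}\rangle$. Then: (i) the pairing is uniquely determined by $\gamma$, and $\gamma=c\beta^{-1}$ for some $c\in K$, where $\beta$ is a $\beta$-factor of $\mathcal{L}$; (ii) the pairing is $(-1)^{n+1}$-symmetric; (iii) if $\gamma\neq0$ the pairing is a polarization.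
   Context: Horizontal means $\theta\langle x,y\rangle=\langle\theta x,y\rangle+\langle x,\theta y\rangle$. A $\beta$-factor of $\mathcal{L}$ is a non-zero solution (in some differential field extension of $K(t)$) of $n\,\theta\beta=2a_{n-1}\beta$. $\operatorname{Fil}^i$ is the $K(t)$-span of $\eta^{(j)}$, $0\le j\le n-1-i$; a polarization is a $K(t)$-bilinear, $(-1)^{n+1}$-symmetric, non-degenerate horizontal pairing with $\langle\operatorname{Fil}^i,\operatorname{Fil}^{n-i}\rangle=0$ for $0\le i\le n-1$. *)

theory Defs
  imports "HOL-Computational_Algebra.Computational_Algebra"
begin

type_synonym 'a rfun = "'a poly fract"

definition cst :: "'a::field_char_0 \<Rightarrow> 'a rfun" where
  "cst c = to_fract [:c:]"

text \<open>The derivation theta = t d/dt on K(t), computed on any representative p/q (the result is independent of it).\<close>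
definition theta :: "'a::field_char_0 rfun \<Rightarrow> 'a rfun" where
  "theta x = (SOME y. \<exists>p q. q \<noteq> 0 \<and> x = Fract p q \<and>
      y = Fract ([:0, 1:] * (pderiv p * q - p * pderiv q)) (q * q))"

text \<open>The module M_L = K(t)[theta]/K(t)[theta]L is the free K(t)-module with basis
  eta^(0), ..., eta^(n-1). Its elements are represented by coefficient functions
  v :: nat => K(t) with v k = 0 for k >= n, meaning sum_{k<n} v k * eta^(k).\<close>
definition Mod :: "nat \<Rightarrow> (nat \<Rightarrow> 'a::field_char_0 rfun) set" where
  "Mod n = {v. \<forall>k\<ge>n. v k = 0}"

definition eta :: "nat \<Rightarrow> nat \<Rightarrow> 'a::field_char_0 rfun" where
  "eta i = (\<lambda>k. if k = i then 1 else 0)"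

text \<open>Action of theta on M_L, using theta eta^(n-1) = eta^(n) = - sum_{k<n} a k eta^(k).\<close>
definition Theta :: "nat \<Rightarrow> (nat \<Rightarrow> 'a::field_char_0 rfun) \<Rightarrow> (nat \<Rightarrow> 'a rfun) \<Rightarrow> (nat \<Rightarrow> 'a rfun)" where
  "Theta n a v = (\<lambda>k. if k < n then
      theta (v k) + (if 1 \<le> k then v (k - 1) else 0) - v (n - 1) * a k
    else 0)"

definition bilinear_on :: "nat \<Rightarrow> ((nat \<Rightarrow> 'a::field_char_0 rfun) \<Rightarrow> (nat \<Rightarrow> 'a rfun) \<Rightarrow> 'a rfun) \<Rightarrow> bool" where
  "bilinear_on n P \<longleftrightarrow>
     (\<forall>u\<in>Mod n. \<forall>v\<in>Mod n. \<forall>w\<in>Mod n. \<forall>c.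
        P (\<lambda>k. u k + v k) w = P u w + P v w \<and>
        P w (\<lambda>k. u k + v k) = P w u + P w v \<and>
        P (\<lambda>k. c * u k) w = c * P u w \<and>
        P w (\<lambda>k. c * u k) = c * P w u)"

definition horizontal :: "nat \<Rightarrow> (nat \<Rightarrow> 'a::field_char_0 rfun) \<Rightarrow> ((nat \<Rightarrow> 'a rfun) \<Rightarrow> (nat \<Rightarrow> 'a rfun) \<Rightarrow> 'a rfun) \<Rightarrow> bool" where
  "horizontal n a P \<longleftrightarrow>
     (\<forall>x\<in>Mod n. \<forall>y\<in>Mod n. theta (P x y) = P (Theta n a x) y + P x (Theta n a y))"

definition admissible_pairing where
  "admissible_pairing n a P \<longleftrightarrow> bilinear_on n P \<and> horizontal n a P \<and>
     (\<forall>i. i + 1 < n \<longrightarrow> P (eta 0) (eta i) = 0)"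

text \<open>Fil^i = span of eta^(j), 0 <= j <= n-1-i (i.e. coefficients vanish for j >= n - i; Fil^n = 0).\<close>
definition Fil :: "nat \<Rightarrow> nat \<Rightarrow> (nat \<Rightarrow> 'a::field_char_0 rfun) set" where
  "Fil n i = {v \<in> Mod n. \<forall>j. n \<le> j + i \<longrightarrow> v j = 0}"

definition polarization where
  "polarization n a P \<longleftrightarrow> bilinear_on n P \<and> horizontal n a P \<and>
     (\<forall>x\<in>Mod n. \<forall>y\<in>Mod n. P y x = (-1) ^ (n + 1) * P x y) \<and>
     (\<forall>x\<in>Mod n. (\<forall>y\<in>Mod n. P x y = 0) \<longrightarrow> x = (\<lambda>_. 0)) \<and>
     (\<forall>i<n. \<forall>x\<in>Fil n i. \<forall>y\<in>Fil n (n - i). P x y = 0)"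

definition diff_ext :: "('a::field_char_0 rfun \<Rightarrow> 'b::field) \<Rightarrow> ('b \<Rightarrow> 'b) \<Rightarrow> bool" where
  "diff_ext phi D \<longleftrightarrow> inj phi \<and> phi 1 = 1 \<and>
     (\<forall>x y. phi (x + y) = phi x + phi y \<and> phi (x * y) = phi x * phi y) \<and>
     (\<forall>x y. D (x + y) = D x + D y \<and> D (x * y) = D x * y + x * D y) \<and>
     (\<forall>x. D (phi x) = phi (theta x))"

definition beta_factor :: "nat \<Rightarrow> (nat \<Rightarrow> 'a::field_char_0 rfun) \<Rightarrow> ('a rfun \<Rightarrow> 'b::field) \<Rightarrow> ('b \<Rightarrow> 'b) \<Rightarrow> 'b \<Rightarrow> bool" where
  "beta_factor n a phi D b \<longleftrightarrow> b \<noteq> 0 \<and> of_nat n * D b = 2 * phi (a (n - 1)) * b"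

end

theory Submission
  imports Defs
begin

text \<open>Write \<open>\<eta>\<^sub>i\<close> for \<open>\<eta>\<^sup>(\<^sup>i\<^sup>)\<close>. For \<open>i, j < n - 1\<close> horizontality reads
  \<open>\<theta>\<langle>\<eta>\<^sub>i, \<eta>\<^sub>j\<rangle> = \<langle>\<eta>\<^sub>i\<^sub>+\<^sub>1, \<eta>\<^sub>j\<rangle> + \<langle>\<eta>\<^sub>i, \<eta>\<^sub>j\<^sub>+\<^sub>1\<rangle>\<close>, so the Gram matrix is determined
  row by row by its first row, which vanishes except for \<open>\<gamma>\<close>: the matrix is zero above the
  antidiagonal and equals \<open>(-1)\<^sup>i \<gamma>\<close> on it. This gives uniqueness; symmetry, because
  \<open>(-1)\<^sup>n\<^sup>+\<^sup>1\<langle>y, x\<rangle>\<close> is admissible with the same \<open>\<gamma>\<close>; and, by the triangular shape,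
  nondegeneracy and the orthogonality of \<open>Fil\<^sup>i\<close> and \<open>Fil\<^sup>n\<^sup>-\<^sup>i\<close>. Along the antidiagonal the
  horizontality relations telescope to \<open>n \<theta>\<gamma> = -2 a\<^sub>n\<^sub>-\<^sub>1 \<gamma>\<close>, so \<open>1/\<gamma>\<close> is a \<open>\<beta>\<close>-factor.\<close>

lemma theta_Fract:
  fixes p q :: "'a::field_char_0 poly"
  assumes q: "q \<noteq> 0"
  shows "theta (Fract p q) = Fract ([:0, 1:] * (pderiv p * q - p * pderiv q)) (q * q)"
  unfolding theta_def
proof (rule someI2[where a="Fract ([:0, 1:] * (pderiv p * q - p * pderiv q)) (q * q)"])
  show "\<exists>p' q'. q' \<noteq> 0 \<and> Fract p q = Fract p' q' \<and>
      Fract ([:0, 1:] * (pderiv p * q - p * pderiv q)) (q * q) =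
      Fract ([:0, 1:] * (pderiv p' * q' - p' * pderiv q')) (q' * q')"
    using q by blast
next
  fix y
  assume "\<exists>p' q'. q' \<noteq> 0 \<and> Fract p q = Fract p' q' \<and>
      y = Fract ([:0, 1:] * (pderiv p' * q' - p' * pderiv q')) (q' * q')"
  then obtain p' q' where q': "q' \<noteq> 0" and same: "Fract p q = Fract p' q'"
    and y: "y = Fract ([:0, 1:] * (pderiv p' * q' - p' * pderiv q')) (q' * q')"
    by blast
  have cross: "p * q' = p' * q"
    using same q q' by (simp add: eq_fract)
  have cross_deriv: "pderiv p * q' = pderiv p' * q + p' * pderiv q - p * pderiv q'"
    using arg_cong[OF cross, of pderiv] by (simp add: pderiv_mult algebra_simps)
  have "(pderiv p * q - p * pderiv q) * (q' * q')
      = q' * (q * (pderiv p * q') - (p * q') * pderiv q)"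
    by (simp add: algebra_simps)
  also have "\<dots> = q' * (q * (pderiv p' * q + p' * pderiv q - p * pderiv q') - (p' * q) * pderiv q)"
    using cross cross_deriv by simp
  also have "\<dots> = q' * q * q * pderiv p' - q * (p * q') * pderiv q'"
    by (simp add: algebra_simps)
  also have "\<dots> = (pderiv p' * q' - p' * pderiv q') * (q * q)"
    using cross by (simp add: algebra_simps)
  finally show "y = Fract ([:0, 1:] * (pderiv p * q - p * pderiv q)) (q * q)"
    using q q' y by (simp add: eq_fract)
qed

lemma theta_0 [simp]: "theta (0::'a::field_char_0 rfun) = 0"
  using theta_Fract[of "1::'a poly" 0] by (simp add: Zero_fract_def eq_fract)

lemma theta_1 [simp]: "theta (1::'a::field_char_0 rfun) = 0"
  using theta_Fract[of "1::'a poly" 1] by (simp add: One_fract_def Zero_fract_def eq_fract)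

lemma theta_minus [simp]: "theta (- x :: 'a::field_char_0 rfun) = - theta x"
proof (cases x)
  case (Fract p q)
  then show ?thesis
    using theta_Fract[of q p] theta_Fract[of q "- p"] by (simp add: algebra_simps pderiv_minus)
qed

lemma theta_neg_one_power_mult [simp]:
  "theta ((- 1) ^ i * x :: 'a::field_char_0 rfun) = (- 1) ^ i * theta x"
  by (cases "even i") simp_all

lemma eta_in_Mod: "i < n \<Longrightarrow> (eta i :: nat \<Rightarrow> 'a::field_char_0 rfun) \<in> Mod n"
  by (simp add: eta_def Mod_def)

lemma Theta_in_Mod: "Theta n a v \<in> Mod n"
  by (simp add: Theta_def Mod_def)

lemma Theta_eta:
  "Suc i < n \<Longrightarrow> Theta n a (eta i :: nat \<Rightarrow> 'a::field_char_0 rfun) = eta (Suc i)"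
  by (auto simp: Theta_def eta_def fun_eq_iff)

lemma Theta_eta_last:
  "n \<ge> 1 \<Longrightarrow>
    Theta n a (eta (n - 1) :: nat \<Rightarrow> 'a::field_char_0 rfun) = (\<lambda>k. if k < n then - a k else 0)"
  by (auto simp: Theta_def eta_def fun_eq_iff)

lemma Mod_linear_expand:
  fixes f :: "(nat \<Rightarrow> 'a::field_char_0 rfun) \<Rightarrow> 'a rfun"
  assumes add: "\<And>u v. u \<in> Mod n \<Longrightarrow> v \<in> Mod n \<Longrightarrow> f (\<lambda>k. u k + v k) = f u + f v"
    and smult: "\<And>c u. u \<in> Mod n \<Longrightarrow> f (\<lambda>k. c * u k) = c * f u"
    and x: "x \<in> Mod n"
  shows "f x = (\<Sum>k<n. x k * f (eta k))"
proof -
  have truncated: "f (\<lambda>k. if k < m then x k else 0) = (\<Sum>k<m. x k * f (eta k))"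
    if "m \<le> n" for m
    using that
  proof (induction m)
    case 0
    have "(\<lambda>_. 0) \<in> Mod n"
      by (simp add: Mod_def)
    from smult[OF this, of 0] show ?case
      by simp
  next
    case (Suc m)
    have split: "(\<lambda>k. if k < Suc m then x k else 0)
        = (\<lambda>k. (if k < m then x k else 0) + x m * eta m k)"
      by (auto simp: eta_def fun_eq_iff less_Suc_eq)
    have trunc: "(\<lambda>k. if k < m then x k else 0) \<in> Mod n"
      using x by (auto simp: Mod_def)
    have eta_m: "eta m \<in> Mod n" and scaled: "(\<lambda>k. x m * eta m k) \<in> Mod n"
      using Suc.prems by (auto simp: Mod_def eta_def)
    have "f (\<lambda>k. if k < Suc m then x k else 0)
        = f (\<lambda>k. if k < m then x k else 0) + x m * f (eta m)"
      unfolding split add[OF trunc scaled] smult[OF eta_m] ..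
    then show ?case
      using Suc by simp
  qed
  have "(\<lambda>k. if k < n then x k else 0) = x"
    using x by (auto simp: Mod_def fun_eq_iff)
  then show ?thesis
    using truncated[of n] by simp
qed

lemma bilinear_on_expand_left:
  assumes "bilinear_on n P" "x \<in> Mod n" "y \<in> Mod n"
  shows "P x y = (\<Sum>k<n. x k * P (eta k) y)"
  by (rule Mod_linear_expand[where f = "\<lambda>x. P x y"]) (use assms in \<open>auto simp: bilinear_on_def\<close>)

lemma bilinear_on_expand_right:
  assumes "bilinear_on n P" "x \<in> Mod n" "y \<in> Mod n"
  shows "P y x = (\<Sum>k<n. x k * P y (eta k))"
  by (rule Mod_linear_expand[where f = "P y"]) (use assms in \<open>auto simp: bilinear_on_def\<close>)

lemma bilinear_on_expand:
  assumes "bilinear_on n P" "x \<in> Mod n" "y \<in> Mod n"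
  shows "P x y = (\<Sum>k<n. \<Sum>l<n. x k * y l * P (eta k) (eta l))"
proof -
  have "P x y = (\<Sum>k<n. x k * P (eta k) y)"
    using assms by (rule bilinear_on_expand_left)
  also have "\<dots> = (\<Sum>k<n. x k * (\<Sum>l<n. y l * P (eta k) (eta l)))"
    using assms by (intro sum.cong refl arg_cong2[where f = "(*)"] bilinear_on_expand_right eta_in_Mod) simp_all
  finally show ?thesis
    by (simp add: sum_distrib_left mult.assoc)
qed

lemma horizontalD:
  "horizontal n a P \<Longrightarrow> x \<in> Mod n \<Longrightarrow> y \<in> Mod n \<Longrightarrow>
    theta (P x y) = P (Theta n a x) y + P x (Theta n a y)"
  by (simp add: horizontal_def)

lemma admissible_pairingD:
  assumes "admissible_pairing n a P"
  shows "bilinear_on n P" "horizontal n a P" "Suc i < n \<Longrightarrow> P (eta 0) (eta i) = 0"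
  using assms by (simp_all add: admissible_pairing_def)

lemma horizontal_eta_left:
  assumes "horizontal n a P" "Suc i < n" "y \<in> Mod n"
  shows "theta (P (eta i) y) = P (eta (Suc i)) y + P (eta i) (Theta n a y)"
  using assms by (simp add: horizontalD eta_in_Mod Theta_eta)

lemma admissible_pairing_basis:
  assumes adm: "admissible_pairing n a P" and "i < n"
  shows "(\<forall>j. i + j < n - 1 \<longrightarrow> P (eta i) (eta j) = 0)
    \<and> P (eta i) (eta (n - 1 - i)) = (- 1) ^ i * P (eta 0) (eta (n - 1))"
  using \<open>i < n\<close>
proof (induction i)
  case 0
  then show ?case
    using admissible_pairingD(3)[OF adm] by simp
next
  case (Suc i)
  then have below: "P (eta i) (eta j) = 0" if "i + j < n - 1" for j
    using that by simp
  have step: "P (eta (Suc i)) (eta j) = theta (P (eta i) (eta j)) - P (eta i) (eta (Suc j))"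
    if "Suc j < n" for j
    using horizontal_eta_left[OF admissible_pairingD(2)[OF adm] Suc.prems, of "eta j"] that
    by (simp add: Theta_eta eta_in_Mod)
  have "P (eta (Suc i)) (eta j) = 0" if "Suc i + j < n - 1" for j
    using that by (simp add: step below)
  moreover have "P (eta (Suc i)) (eta (n - 1 - Suc i)) = (- 1) ^ Suc i * P (eta 0) (eta (n - 1))"
    using Suc by (simp add: step below Suc_diff_Suc)
  ultimately show ?case
    by blast
qed

lemma admissible_pairing_below_antidiagonal:
  "admissible_pairing n a P \<Longrightarrow> i + j < n - 1 \<Longrightarrow> P (eta i) (eta j) = 0"
  using admissible_pairing_basis[of n a P i] by simp

lemma admissible_pairing_antidiagonal:
  "admissible_pairing n a P \<Longrightarrow> i < n \<Longrightarrow>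
    P (eta i) (eta (n - 1 - i)) = (- 1) ^ i * P (eta 0) (eta (n - 1))"
  using admissible_pairing_basis[of n a P i] by simp

lemma admissible_pairing_unique:
  assumes adm_P: "admissible_pairing n a P" and adm_Q: "admissible_pairing n a Q"
    and same_gamma: "Q (eta 0) (eta (n - 1)) = P (eta 0) (eta (n - 1))"
    and x: "x \<in> Mod n" and y: "y \<in> Mod n"
  shows "Q x y = P x y"
proof -
  have bil: "bilinear_on n P" "bilinear_on n Q" and hor: "horizontal n a P" "horizontal n a Q"
    using adm_P adm_Q by (simp_all add: admissible_pairingD)
  have "\<forall>j<n. Q (eta i) (eta j) = P (eta i) (eta j)" if "i < n" for i
    using that
  proof (induction i)
    case 0
    show ?case
    proof (intro allI impI)
      fix j assume "j < n"
      then consider "j + 1 < n" | "j = n - 1"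
        by linarith
      then show "Q (eta 0) (eta j) = P (eta 0) (eta j)"
        using adm_P adm_Q same_gamma by cases (simp_all add: admissible_pairingD)
    qed
  next
    case (Suc i)
    show ?case
    proof (intro allI impI)
      fix j assume "j < n"
      have "Q (eta i) (Theta n a (eta j)) = P (eta i) (Theta n a (eta j))"
        using Suc bil by (simp add: bilinear_on_expand_right Theta_in_Mod eta_in_Mod)
      then show "Q (eta (Suc i)) (eta j) = P (eta (Suc i)) (eta j)"
        using Suc \<open>j < n\<close> horizontal_eta_left[OF hor(1) Suc.prems, of "eta j"]
          horizontal_eta_left[OF hor(2) Suc.prems, of "eta j"]
        by (simp add: eta_in_Mod)
    qed
  qed
  then show ?thesis
    using bil x y by (simp add: bilinear_on_expand)
qed

lemma admissible_pairing_transpose: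
  assumes "admissible_pairing n a P"
  shows "admissible_pairing n a (\<lambda>x y. (- 1) ^ k * P y x)"
  using assms admissible_pairing_below_antidiagonal[OF assms]
  unfolding admissible_pairing_def bilinear_on_def horizontal_def
  by (simp add: distrib_left mult.left_commute)

lemma admissible_pairing_symmetric:
  assumes "n \<ge> 1" and adm: "admissible_pairing n a P" and "x \<in> Mod n" "y \<in> Mod n"
  shows "P y x = (- 1) ^ (n + 1) * P x y"
proof -
  obtain m where n: "n = Suc m"
    using \<open>n \<ge> 1\<close> by (cases n) auto
  have "(- 1) ^ (n + 1) * P (eta (n - 1)) (eta 0) = P (eta 0) (eta (n - 1))"
    using admissible_pairing_antidiagonal[OF adm, of "n - 1"] by (simp add: n)
  then have "(- 1) ^ (n + 1) * P y x = P x y"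
    using admissible_pairing_unique[OF adm admissible_pairing_transpose[OF adm, of "n + 1"]] assms
    by simp
  then show ?thesis
    by (metis left_minus_one_mult_self)
qed

lemma admissible_pairing_theta_gamma_step:
  assumes adm: "admissible_pairing n a P" and "Suc i < n"
  shows "theta (P (eta 0) (eta (n - 1)))
    = (- 1) ^ i * P (eta i) (Theta n a (eta (n - 1 - i)))
      - (- 1) ^ Suc i * P (eta (Suc i)) (Theta n a (eta (n - 1 - Suc i)))"
proof -
  have shift: "Theta n a (eta (n - 1 - Suc i)) = eta (n - 1 - i)"
    using \<open>Suc i < n\<close> Theta_eta[of "n - 1 - Suc i" n a] by (simp add: Suc_diff_Suc)
  have "theta (P (eta i) (eta (n - 1 - i)))
      = P (eta (Suc i)) (eta (n - 1 - i)) + P (eta i) (Theta n a (eta (n - 1 - i)))"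
    using admissible_pairingD(2)[OF adm] \<open>Suc i < n\<close> by (simp add: horizontal_eta_left eta_in_Mod)
  moreover have "P (eta i) (eta (n - 1 - i)) = (- 1) ^ i * P (eta 0) (eta (n - 1))"
    using admissible_pairing_antidiagonal[OF adm, of i] \<open>Suc i < n\<close> by simp
  ultimately have "(- 1) ^ i * ((- 1) ^ i * theta (P (eta 0) (eta (n - 1))))
      = (- 1) ^ i * (P (eta (Suc i)) (eta (n - 1 - i)) + P (eta i) (Theta n a (eta (n - 1 - i))))"
    by simp
  then show ?thesis
    unfolding left_minus_one_mult_self shift by (simp add: algebra_simps)
qed

lemma admissible_pairing_theta_gamma_last:
  assumes "n \<ge> 1" and adm: "admissible_pairing n a P"
  shows "theta (P (eta 0) (eta (n - 1)))
    = P (eta 0) (Theta n a (eta (n - 1))) + (- 1) ^ (n - 1) * P (eta (n - 1)) (Theta n a (eta 0))"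
proof -
  obtain m where n: "n = Suc m"
    using \<open>n \<ge> 1\<close> by (cases n) auto
  have in_Mod: "eta 0 \<in> Mod n" "eta (n - 1) \<in> Mod n"
    using \<open>n \<ge> 1\<close> by (simp_all add: eta_in_Mod)
  have "theta (P (eta (n - 1)) (eta 0))
      = P (Theta n a (eta (n - 1))) (eta 0) + P (eta (n - 1)) (Theta n a (eta 0))"
    using admissible_pairingD(2)[OF adm] in_Mod(2,1) by (rule horizontalD)
  moreover have "P (eta (n - 1)) (eta 0) = (- 1) ^ (n - 1) * P (eta 0) (eta (n - 1))"
    using admissible_pairing_antidiagonal[OF adm, of "n - 1"] \<open>n \<ge> 1\<close> by simp
  \<comment> \<open>Theta n a (eta (n - 1)) is not a basis vector: symmetry moves it into the second
    argument, where only its (n - 1)-th coordinate survives against eta 0.\<close>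
  moreover have "P (Theta n a (eta (n - 1))) (eta 0)
      = (- 1) ^ (n - 1) * P (eta 0) (Theta n a (eta (n - 1)))"
    using admissible_pairing_symmetric[OF assms in_Mod(1) Theta_in_Mod] by (simp add: n)
  ultimately have "(- 1) ^ (n - 1) * ((- 1) ^ (n - 1) * theta (P (eta 0) (eta (n - 1))))
      = (- 1) ^ (n - 1) * ((- 1) ^ (n - 1) * P (eta 0) (Theta n a (eta (n - 1)))
        + P (eta (n - 1)) (Theta n a (eta 0)))"
    by simp
  then show ?thesis
    unfolding left_minus_one_mult_self by (simp add: distrib_left)
qed

lemma admissible_pairing_eta0_Theta_last:
  assumes "n \<ge> 1" and adm: "admissible_pairing n a P"
  shows "P (eta 0) (Theta n a (eta (n - 1))) = - a (n - 1) * P (eta 0) (eta (n - 1))"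
proof -
  have "P (eta 0) (Theta n a (eta (n - 1))) = (\<Sum>k<n. Theta n a (eta (n - 1)) k * P (eta 0) (eta k))"
    using \<open>n \<ge> 1\<close>
    by (intro bilinear_on_expand_right admissible_pairingD(1)[OF adm] Theta_in_Mod eta_in_Mod) simp
  also have "\<dots> = (\<Sum>k<n. - a k * P (eta 0) (eta k))"
    unfolding Theta_eta_last[OF \<open>n \<ge> 1\<close>] by simp
  also have "\<dots> = - a (n - 1) * P (eta 0) (eta (n - 1))"
  proof (subst sum.remove[of _ "n - 1"])
    have "P (eta 0) (eta k) = 0" if "k \<in> {..<n} - {n - 1}" for k
      using that admissible_pairingD(3)[OF adm, of k] by auto
    then show "- a (n - 1) * P (eta 0) (eta (n - 1)) + (\<Sum>k\<in>{..<n} - {n - 1}. - a k * P (eta 0) (eta k))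
        = - a (n - 1) * P (eta 0) (eta (n - 1))"
      by simp
  qed (use \<open>n \<ge> 1\<close> in simp_all)
  finally show ?thesis .
qed

lemma admissible_pairing_gamma_equation:
  assumes "n \<ge> 1" and adm: "admissible_pairing n a P"
  shows "of_nat n * theta (P (eta 0) (eta (n - 1))) = - 2 * a (n - 1) * P (eta 0) (eta (n - 1))"
proof -
  define \<gamma> where "\<gamma> = P (eta 0) (eta (n - 1))"
  define u where "u i = (- 1) ^ i * P (eta i) (Theta n a (eta (n - 1 - i)))" for i
  have "of_nat (n - 1) * theta \<gamma> = (\<Sum>i<n - 1. theta \<gamma>)"
    by simp
  also have "\<dots> = (\<Sum>i<n - 1. u i - u (Suc i))"
    using admissible_pairing_theta_gamma_step[OF adm] by (intro sum.cong) (auto simp: u_def \<gamma>_def)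
  also have "\<dots> = u 0 - u (n - 1)"
    by (rule sum_lessThan_telescope')
  finally have init: "of_nat (n - 1) * theta \<gamma> = u 0 - u (n - 1)" .
  have last: "theta \<gamma> = u 0 + u (n - 1)"
    using admissible_pairing_theta_gamma_last[OF assms] by (simp add: u_def \<gamma>_def)
  have "of_nat n * theta \<gamma> = of_nat (n - 1) * theta \<gamma> + theta \<gamma>"
    using \<open>n \<ge> 1\<close> by (simp add: algebra_simps)
  also have "\<dots> = (u 0 - u (n - 1)) + (u 0 + u (n - 1))"
    by (subst init, subst last) (rule refl)
  also have "\<dots> = 2 * u 0"
    by simp
  also have "\<dots> = - 2 * a (n - 1) * \<gamma>"
    using admissible_pairing_eta0_Theta_last[OF assms] by (simp add: u_def \<gamma>_def)
  finally show ?thesis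
    unfolding \<gamma>_def .
qed

lemma diff_ext_phi_zero:
  assumes "diff_ext phi D"
  shows "phi 0 = 0"
proof -
  have "phi (0 + 0) = phi 0 + phi 0"
    using assms unfolding diff_ext_def by blast
  then show ?thesis
    by (simp only: add_0 add_cancel_right_right)
qed

lemma diff_ext_phi_uminus:
  assumes "diff_ext phi D"
  shows "phi (- x) = - phi x"
proof -
  have "phi (- x + x) = phi (- x) + phi x"
    using assms unfolding diff_ext_def by blast
  then show ?thesis
    using diff_ext_phi_zero[OF assms] by (simp add: eq_neg_iff_add_eq_0)
qed

lemma diff_ext_phi_of_nat: "diff_ext phi D \<Longrightarrow> phi (of_nat m) = of_nat m"
  using diff_ext_phi_zero[of phi D] unfolding diff_ext_def by (induction m) simp_all

lemma diff_ext_D_inverse: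
  assumes "diff_ext phi D" "y \<noteq> 0"
  shows "D (inverse y) = - D y * inverse y ^ 2"
proof -
  have Dmult: "D (x * z) = D x * z + x * D z" for x z
    using assms(1) by (simp add: diff_ext_def)
  have "D 1 = D 1 + D 1"
    using Dmult[of 1 1] by (simp only: mult_1_left mult_1_right)
  then have "D 1 = 0"
    by (simp only: add_cancel_right_right)
  then have "y * D (inverse y) = - (D y * inverse y)"
    using Dmult[of y "inverse y"] \<open>y \<noteq> 0\<close> by (simp add: eq_neg_iff_add_eq_0 add.commute)
  then have "D (inverse y) = inverse y * - (D y * inverse y)"
    using \<open>y \<noteq> 0\<close> by (simp add: field_simps)
  then show ?thesis
    by (simp add: power2_eq_square)
qed

lemma inverse_beta_factor:
  assumes de: "diff_ext phi D" and "g \<noteq> 0"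
    and ode: "of_nat n * theta g = - 2 * a (n - 1) * g"
  shows "beta_factor n a phi D (inverse (phi g))"
proof -
  have phi_mult: "phi (x * y) = phi x * phi y" and D_phi: "D (phi x) = phi (theta x)" for x y
    using de by (simp_all add: diff_ext_def)
  have "inj phi"
    using de by (simp add: diff_ext_def)
  then have "phi g \<noteq> phi 0"
    using \<open>g \<noteq> 0\<close> by (simp add: inj_eq)
  then have "phi g \<noteq> 0"
    by (simp add: diff_ext_phi_zero[OF de])
  have "of_nat n * D (phi g) = phi (of_nat n * theta g)"
    by (simp add: phi_mult diff_ext_phi_of_nat[OF de] D_phi)
  also have "\<dots> = - 2 * phi (a (n - 1)) * phi g"
    unfolding ode phi_mult diff_ext_phi_uminus[OF de]
    using diff_ext_phi_of_nat[OF de, of 2] by simp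
  finally have ode_phi: "of_nat n * D (phi g) = - 2 * phi (a (n - 1)) * phi g" .
  have "of_nat n * D (inverse (phi g)) = - (of_nat n * D (phi g)) * inverse (phi g) ^ 2"
    using diff_ext_D_inverse[OF de \<open>phi g \<noteq> 0\<close>] by simp
  also have "\<dots> = 2 * phi (a (n - 1)) * inverse (phi g)"
    unfolding ode_phi using \<open>phi g \<noteq> 0\<close> by (simp add: power2_eq_square)
  finally show ?thesis
    using \<open>phi g \<noteq> 0\<close> by (simp add: beta_factor_def)
qed

lemma admissible_pairing_gamma_beta_factor:
  assumes "n \<ge> 1" and "admissible_pairing n a P"
    and de: "diff_ext phi D" and "\<exists>b. beta_factor n a phi D b"
  shows "\<exists>b c. beta_factor n a phi D b \<and> phi (P (eta 0) (eta (n - 1))) = phi (cst c) * inverse b"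
proof (cases "P (eta 0) (eta (n - 1)) = 0")
  case True
  obtain b where "beta_factor n a phi D b"
    using assms(4) by blast
  moreover have "cst 0 = (0 :: 'a rfun)"
    by (simp add: cst_def)
  ultimately show ?thesis
    using True diff_ext_phi_zero[OF de] by (intro exI[of _ b] exI[of _ 0]) simp
next
  case False
  have "cst 1 = (1 :: 'a rfun)"
    by (simp add: cst_def pCons_one)
  then have "phi (P (eta 0) (eta (n - 1))) = phi (cst 1) * inverse (inverse (phi (P (eta 0) (eta (n - 1)))))"
    using de by (simp add: diff_ext_def)
  then show ?thesis
    using inverse_beta_factor[where n = n and a = a, OF de False
        admissible_pairing_gamma_equation[OF assms(1,2)]] by blast
qed

lemma admissible_pairing_triangular:
  assumes adm: "admissible_pairing n a P" and x: "x \<in> Mod n" and "m < n"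
    and above: "\<And>k. m < k \<Longrightarrow> x k = 0"
  shows "P x (eta (n - 1 - m)) = x m * ((- 1) ^ m * P (eta 0) (eta (n - 1)))"
proof -
  have "P x (eta (n - 1 - m)) = (\<Sum>k<n. x k * P (eta k) (eta (n - 1 - m)))"
    using admissible_pairingD(1)[OF adm] x \<open>m < n\<close> by (simp add: bilinear_on_expand_left eta_in_Mod)
  also have "\<dots> = x m * P (eta m) (eta (n - 1 - m))"
  proof (subst sum.remove[of _ m])
    have "x k * P (eta k) (eta (n - 1 - m)) = 0" if "k \<in> {..<n} - {m}" for k
    proof (cases "m < k")
      case False
      with that \<open>m < n\<close> have "k + (n - 1 - m) < n - 1"
        by auto
      then show ?thesis
        by (simp add: admissible_pairing_below_antidiagonal[OF adm])
    qed (simp add: above)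
    then have "(\<Sum>k\<in>{..<n} - {m}. x k * P (eta k) (eta (n - 1 - m))) = 0"
      by (intro sum.neutral) blast
    then show "x m * P (eta m) (eta (n - 1 - m)) + (\<Sum>k\<in>{..<n} - {m}. x k * P (eta k) (eta (n - 1 - m)))
        = x m * P (eta m) (eta (n - 1 - m))"
      by simp
  qed (use \<open>m < n\<close> in simp_all)
  also have "\<dots> = x m * ((- 1) ^ m * P (eta 0) (eta (n - 1)))"
    using admissible_pairing_antidiagonal[OF adm \<open>m < n\<close>] by simp
  finally show ?thesis .
qed

lemma admissible_pairing_nondegenerate:
  assumes adm: "admissible_pairing n a P" and "P (eta 0) (eta (n - 1)) \<noteq> 0"
    and x: "x \<in> Mod n" and orth: "\<forall>y\<in>Mod n. P x y = 0"
  shows "x = (\<lambda>_. 0)"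
proof (rule ccontr)
  assume "x \<noteq> (\<lambda>_. 0)"
  define S where "S = {k. x k \<noteq> 0}"
  have "S \<subseteq> {..<n}"
    using x by (auto simp: S_def Mod_def not_less[symmetric])
  moreover have "S \<noteq> {}"
    using \<open>x \<noteq> (\<lambda>_. 0)\<close> by (auto simp: S_def)
  moreover define m where "m = Max S"
  ultimately have fin: "finite S" and "m \<in> S" "m < n"
    using finite_subset[of S "{..<n}"] Max_in[of S] by auto
  have "x k = 0" if "m < k" for k
  proof (rule ccontr)
    assume "x k \<noteq> 0"
    then have "k \<le> m"
      using fin by (simp add: S_def m_def)
    with \<open>m < k\<close> show False
      by simp
  qed
  then have "P x (eta (n - 1 - m)) \<noteq> 0"
    using admissible_pairing_triangular[OF adm x \<open>m < n\<close>] \<open>m \<in> S\<close> assms(2) by (simp add: S_def)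
  then show False
    using orth \<open>m < n\<close> by (simp add: eta_in_Mod)
qed

lemma admissible_pairing_Fil_orthogonal:
  assumes adm: "admissible_pairing n a P" and "i < n"
    and x: "x \<in> Fil n i" and y: "y \<in> Fil n (n - i)"
  shows "P x y = 0"
proof -
  have terms: "x k * y l * P (eta k) (eta l) = 0" for k l
  proof (cases "n \<le> k + i \<or> n \<le> l + (n - i)")
    case True
    then show ?thesis
      using x y by (auto simp: Fil_def)
  next
    case False
    then have "k + l < n - 1"
      using \<open>i < n\<close> by linarith
    then show ?thesis
      by (simp add: admissible_pairing_below_antidiagonal[OF adm])
  qed
  have "x \<in> Mod n" "y \<in> Mod n"
    using x y by (simp_all add: Fil_def)
  then show ?thesis
    using admissible_pairingD(1)[OF adm] by (simp add: bilinear_on_expand terms)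
qed

lemma admissible_pairing_polarization:
  assumes "n \<ge> 1" and adm: "admissible_pairing n a P" and "P (eta 0) (eta (n - 1)) \<noteq> 0"
  shows "polarization n a P"
  using admissible_pairingD(1,2)[OF adm] admissible_pairing_symmetric[OF assms(1,2)]
    admissible_pairing_nondegenerate[OF adm assms(3)] admissible_pairing_Fil_orthogonal[OF adm]
  unfolding polarization_def by blast

theorem lemma1p3:
  fixes n :: nat and a :: "nat \<Rightarrow> 'a::field_char_0 rfun"
    and P :: "(nat \<Rightarrow> 'a rfun) \<Rightarrow> (nat \<Rightarrow> 'a rfun) \<Rightarrow> 'a rfun"
  assumes "n \<ge> 1"
    and "admissible_pairing n a P"
  defines "\<gamma> \<equiv> P (eta 0) (eta (n - 1))"
  shows
    "(\<forall>Q. admissible_pairing n a Q \<and> Q (eta 0) (eta (n - 1)) = \<gamma> \<longrightarrow>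
          (\<forall>x\<in>Mod n. \<forall>y\<in>Mod n. Q x y = P x y))
     \<and> (\<forall>(phi :: 'a rfun \<Rightarrow> 'b::field) D. diff_ext phi D \<and> (\<exists>b. beta_factor n a phi D b) \<longrightarrow>
          (\<exists>b c. beta_factor n a phi D b \<and> phi \<gamma> = phi (cst c) * inverse b))
     \<and> (\<forall>x\<in>Mod n. \<forall>y\<in>Mod n. P y x = (-1) ^ (n + 1) * P x y)
     \<and> (\<gamma> \<noteq> 0 \<longrightarrow> polarization n a P)"
  unfolding \<gamma>_def
proof (intro conjI allI impI ballI)
  show "Q x y = P x y"
    if "admissible_pairing n a Q \<and> Q (eta 0) (eta (n - 1)) = P (eta 0) (eta (n - 1))"
      and "x \<in> Mod n" "y \<in> Mod n" for Q x y
    using admissible_pairing_unique[OF assms(2)] that by blast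
  show "\<exists>b c. beta_factor n a phi D b \<and> phi (P (eta 0) (eta (n - 1))) = phi (cst c) * inverse b"
    if "diff_ext phi D \<and> (\<exists>b. beta_factor n a phi D b)" for phi :: "'a rfun \<Rightarrow> 'b" and D
    using admissible_pairing_gamma_beta_factor[OF assms(1,2)] that by blast
  show "P y x = (- 1) ^ (n + 1) * P x y" if "x \<in> Mod n" "y \<in> Mod n" for x y
    using admissible_pairing_symmetric[OF assms(1,2) that] .
  show "polarization n a P" if "P (eta 0) (eta (n - 1)) \<noteq> 0"
    using admissible_pairing_polarization[OF assms(1,2) that] .
qed

end
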